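(* Let $N\ge2$, $J=1$, let $h_0,h_1\in\mathbb{C}^N$ with $\|h_0\|=\|h_1\|=1$ and $h_0^{\sf H}h_1=\sin\tau\,e^{i\phi_z}$, where $\tau\in[0,\pi/2)$ and $\phi_z\in[0,2\pi)$; let $\sigma_0^2,\sigma_1^2,\sigma_n^2>0$ and $c_1=|c_1|e^{i\phi_c}$ with $|c_1|\le\sigma_0\sigma_1$, $\phi_c\in[0,2\pi)$. Then for all $\lambda\ge0$, \[ \mathrm{MSE}(\lambda)=\frac{|\delta_2|^2(\sigma_1^2\cos^2\tau+\sigma_n^2)}{g(\lambda)^2}-\frac{2\sigma_n^2\delta_1\tan\tau}{g(\lambda)}+\sigma_n^2(\tan^2\tau+1), \] where $g(\lambda):=\lambda\cos^2\tau+\sigma_1^2\cos^2\tau+\sigma_n^2$, $\delta_1:=\sigma_n^2\tan\tau-|c_1|\cos\tau\cos(\phi_c+\phi_z)$, $\delta_2:=\sigma_n^2\tan\tau-|c_1|\cos\tau\,e^{i(\phi_c+\phi_z)}$. Moreover: 1. If $\delta_2=0$ (hence $\delta_1=0$), then $\mathrm{MSE}(\lambda)=\sigma_n^2(\tan^2\tau+1)$ for all $\lambda\ge0$. 2. If $\delta_2\neq0$, let $\gamma:=\delta_1\sigma_n^2\tan\tau/|\delta_2|^2$. (a) If $\gamma\le0$ (equivalently $\delta_1\tan\tau\le0$), $\mathrm{MSE}(\lambda)$ is decreasing on $[0,\infty)$ and $\inf_{\lambda\ge0}\mathrm{MSE}(\lambda)=\lim_{\lambda\to\infty}\mathrm{MSE}(\lambda)=J_{\rm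 MSE}(w_{\rm ZF})$. (b) If $\gamma\ge1$, $\mathrm{MSE}(\lambda)$ is increasing on $[0,\infty)$ and minimized at $\lambda=0$. (c) If $\gamma\in(0,1)$, $\mathrm{MSE}$ is minimized over $[0,\infty)$ by $\lambda=\dfrac{\sigma_1^2\cos^2\tau+\sigma_n^2}{\cos^2\tau}\cdot\dfrac{1-\gamma}{\gamma}>0$.
   Context: Complex single-interference model: $y(k)=s_0(k)h_0+s_1(k)h_1+n(k)\in\mathbb{C}^N$, with zero-mean jointly weakly stationary complex signals $s_0,s_1$, $\sigma_j^2:=E|s_j(k)|^2$, $c_1:=E[s_0^*(k)s_1(k)]$, and noise $n(k)\sim\mathcal{CN}(0,\sigma_n^2I)$ uncorrelated with the signals. $R:=E[y(k)y(k)^{\sf H}]$. For $\lambda\ge0$, $R_\lambda:=R+\lambda h_1h_1^{\sf H}$ and the RZF beamformer is $w_{\rm RZF}(\lambda):=R_\lambda^{-1}h_0/(h_0^{\sf H}R_\lambda^{-1}h_0)$. The ZF beamformer is $w_{\rm ZF}:=R^{-1}H(H^{\sf H}R^{-1}H)^{-1}e_1$ with $H:=[h_0\ h_1]$, $e_1:=[1,0]^{\sf T}$. The MSE of $w$ is $J_{\rm MSE}(w):=E|w^{\sf H}y(k)-s_0(k)|^2$, and $\mathrm{MSE}(\lambda):=J_{\rm MSE}(w_{\rm RZF}(\lambda))$. *)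

theory Defs
  imports "HOL-Analysis.Analysis"
begin

text \<open>Complex column vectors in C^N are modelled as complex ^ 'n; N x N matrices as
complex ^ 'n ^ 'n (rows indexed first).\<close>

definition hip :: "complex ^ 'n \<Rightarrow> complex ^ 'n \<Rightarrow> complex" where
  "hip x y = (\<Sum>i\<in>UNIV. cnj (x $ i) * y $ i)"

definition outer :: "complex ^ 'n \<Rightarrow> complex ^ 'm \<Rightarrow> complex ^ 'm ^ 'n" where
  "outer x y = (\<chi> i j. x $ i * cnj (y $ j))"

definition ctrans :: "complex ^ 'm ^ 'n \<Rightarrow> complex ^ 'n ^ 'm" where
  "ctrans A = (\<chi> i j. cnj (A $ j $ i))"

text \<open>Covariance R = E[y y^H] of y = s0 h0 + s1 h1 + n, with E|s_j|^2 = sigma_j^2,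
 c1 = E[s0^* s1] (so E[s1 s0^*] = c1, E[s0 s1^*] = cnj c1), noise covariance sigma_n^2 I.\<close>
definition Rcov :: "real \<Rightarrow> real \<Rightarrow> complex \<Rightarrow> real \<Rightarrow> complex ^ 'n \<Rightarrow> complex ^ 'n
    \<Rightarrow> complex ^ 'n ^ 'n" where
  "Rcov s0 s1 c1 sn h0 h1 =
     (\<chi> i j. complex_of_real (s0\<^sup>2) * outer h0 h0 $ i $ j
          + complex_of_real (s1\<^sup>2) * outer h1 h1 $ i $ j
          + cnj c1 * outer h0 h1 $ i $ j + c1 * outer h1 h0 $ i $ j
          + complex_of_real (sn\<^sup>2) * mat 1 $ i $ j)"

text \<open>Cross-correlation p = E[y s0^*] = sigma_0^2 h0 + c1 h1.\<close>
definition pcross :: "real \<Rightarrow> complex \<Rightarrow> complex ^ 'n \<Rightarrow> complex ^ 'n \<Rightarrow> complex ^ 'n" where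
  "pcross s0 c1 h0 h1 = complex_of_real (s0\<^sup>2) *s h0 + c1 *s h1"

text \<open>J_MSE(w) = E|w^H y - s0|^2 = w^H R w - w^H p - p^H w + sigma_0^2 (a real number).\<close>
definition J_MSE :: "real \<Rightarrow> real \<Rightarrow> complex \<Rightarrow> real \<Rightarrow> complex ^ 'n \<Rightarrow> complex ^ 'n
    \<Rightarrow> complex ^ 'n \<Rightarrow> real" where
  "J_MSE s0 s1 c1 sn h0 h1 w =
     Re (hip w (Rcov s0 s1 c1 sn h0 h1 *v w) - hip w (pcross s0 c1 h0 h1)
         - hip (pcross s0 c1 h0 h1) w + complex_of_real (s0\<^sup>2))"

definition w_RZF :: "real \<Rightarrow> real \<Rightarrow> complex \<Rightarrow> real \<Rightarrow> complex ^ 'n \<Rightarrow> complex ^ 'n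
    \<Rightarrow> real \<Rightarrow> complex ^ 'n" where
  "w_RZF s0 s1 c1 sn h0 h1 lam =
     (let Rl = Rcov s0 s1 c1 sn h0 h1 + (\<chi> i j. complex_of_real lam * outer h1 h1 $ i $ j);
          v = matrix_inv Rl *v h0
      in inverse (hip h0 v) *s v)"

definition Hmat :: "complex ^ 'n \<Rightarrow> complex ^ 'n \<Rightarrow> complex ^ 2 ^ 'n" where
  "Hmat h0 h1 = (\<chi> i k. if k = 1 then h0 $ i else h1 $ i)"

definition e1 :: "complex ^ 2" where
  "e1 = (\<chi> k. if k = 1 then 1 else 0)"

definition w_ZF :: "real \<Rightarrow> real \<Rightarrow> complex \<Rightarrow> real \<Rightarrow> complex ^ 'n \<Rightarrow> complex ^ 'n
    \<Rightarrow> complex ^ 'n" where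
  "w_ZF s0 s1 c1 sn h0 h1 =
     (let Ri = matrix_inv (Rcov s0 s1 c1 sn h0 h1); H = Hmat h0 h1
      in (Ri ** H ** matrix_inv (ctrans H ** Ri ** H)) *v e1)"

definition MSE :: "real \<Rightarrow> real \<Rightarrow> complex \<Rightarrow> real \<Rightarrow> complex ^ 'n \<Rightarrow> complex ^ 'n
    \<Rightarrow> real \<Rightarrow> real" where
  "MSE s0 s1 c1 sn h0 h1 lam = J_MSE s0 s1 c1 sn h0 h1 (w_RZF s0 s1 c1 sn h0 h1 lam)"

end

theory Submission
  imports Defs
begin

(* R_lambda is the covariance of the same model with sigma_1^2 raised to sigma_1^2 + lambda,
   so w_RZF(lambda) is the MVDR beamformer of that model.  This beamformer lies in span{h0, h1}:
   for w = (1 - x rho) h0 + x h1 with rho = h0^H h1 and a suitable x, R w is a multiple of h0.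
   As h0^H w = 1, the MSE reduces to sigma_1^2 |h1^H w|^2 + sigma_n^2 |w|^2, which in polar
   coordinates is the stated rational function of g(lambda).  In the variable
   y = g(0) / g(lambda), decreasing from 1 to 0, the MSE is a positive multiple of (y - gamma)^2
   plus a constant, which gives the three regimes and the minimiser y = gamma.  The limit
   lambda -> oo is sigma_n^2 / cos^2 tau, the error of w_ZF, the vector of span{h0, h1} with
   h0^H w = 1 and h1^H w = 0. *)

lemma hip_cnj: "cnj (hip x y) = hip y x"
  by (simp add: hip_def mult.commute)

lemma hip_smult_right: "hip x (a *s y) = a * hip x y"
  by (simp add: hip_def sum_distrib_left algebra_simps)

lemma hip_smult_left: "hip (a *s x) y = cnj a * hip x y"
  by (simp add: hip_def sum_distrib_left algebra_simps)

lemma hip_add_right: "hip x (y + z) = hip x y + hip x z"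
  by (simp add: hip_def sum.distrib algebra_simps)

lemma hip_add_left: "hip (x + y) z = hip x z + hip y z"
  by (simp add: hip_def sum.distrib algebra_simps)

lemma hip_zero_right [simp]: "hip x 0 = 0"
  by (simp add: hip_def)

lemma hip_self: "hip x x = complex_of_real ((norm x)\<^sup>2)"
proof -
  have "hip x x = (\<Sum>i\<in>UNIV. complex_of_real ((norm (x $ i))\<^sup>2))"
    unfolding hip_def by (intro sum.cong refl) (metis complex_norm_square mult.commute)
  also have "\<dots> = complex_of_real ((norm x)\<^sup>2)"
    by (simp add: norm_vec_def L2_set_def sum_nonneg)
  finally show ?thesis .
qed

lemmas hip_linear = hip_add_right hip_add_left hip_smult_right hip_smult_left

lemma matrix_vector_mult_smult: "(A :: 'a::comm_semiring_1 ^ 'n ^ 'm) *v (c *s x) = c *s (A *v x)"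
  by (simp add: vec_eq_iff matrix_vector_mult_def sum_distrib_left algebra_simps)

lemma matrix_inv_cancel:
  fixes A :: "'a::field ^ 'n ^ 'n"
  assumes "\<And>x. A *v x = 0 \<Longrightarrow> x = 0"
  shows "A ** matrix_inv A = mat 1" and "matrix_inv A ** A = mat 1"
proof -
  have "invertible A"
    using assms matrix_left_invertible_ker invertible_left_inverse by blast
  then have "\<exists>A'. A ** A' = mat 1 \<and> A' ** A = mat 1" unfolding invertible_def .
  then have "A ** matrix_inv A = mat 1 \<and> matrix_inv A ** A = mat 1"
    unfolding matrix_inv_def by (rule someI_ex)
  then show "A ** matrix_inv A = mat 1" "matrix_inv A ** A = mat 1" by blast+
qed

lemma matrix_inv_mult_vector_cancel:
  fixes A :: "'a::field ^ 'n ^ 'n"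
  assumes "\<And>x. A *v x = 0 \<Longrightarrow> x = 0"
  shows "A *v (matrix_inv A *v y) = y"
  by (metis matrix_inv_cancel(1)[OF assms] matrix_vector_mul_assoc matrix_vector_mul_lid)

lemma matrix_inv_mult_vector_eqI:
  fixes A :: "'a::field ^ 'n ^ 'n"
  assumes "\<And>x. A *v x = 0 \<Longrightarrow> x = 0" and "A *v w = b"
  shows "matrix_inv A *v b = w"
  using assms(2) matrix_inv_cancel(2)[OF assms(1)]
  by (metis matrix_vector_mul_assoc matrix_vector_mul_lid)

lemma outer_mult_vector: "(\<chi> i j. a * outer x y $ i $ j) *v z = (a * hip y z) *s x"
  by (simp add: vec_eq_iff matrix_vector_mult_def outer_def hip_def sum_distrib_left algebra_simps)

lemma scaled_mat_1_mult_vector: "(\<chi> i j. a * mat 1 $ i $ j) *v z = a *s z"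
proof -
  have "(\<chi> i j. a * mat 1 $ i $ j) = (\<chi> i j. if i = j then a else 0)"
    by (simp add: vec_eq_iff mat_def)
  moreover have "(\<chi> i j. if i = j then a else 0) *v z = a *s z"
    unfolding matrix_vector_mult_def
    by (simp add: vec_eq_iff if_distrib[of "\<lambda>x. x * _"] cong: if_cong)
  ultimately show ?thesis by metis
qed

lemma Rcov_mult_vector:
  "Rcov s0 s1 c1 sn h0 h1 *v y =
     (complex_of_real (s0\<^sup>2) * hip h0 y + cnj c1 * hip h1 y) *s h0
   + (complex_of_real (s1\<^sup>2) * hip h1 y + c1 * hip h0 y) *s h1
   + complex_of_real (sn\<^sup>2) *s y"
proof -
  have Rcov_sum: "Rcov s0 s1 c1 sn h0 h1 =
      (\<chi> i j. complex_of_real (s0\<^sup>2) * outer h0 h0 $ i $ j)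
    + (\<chi> i j. complex_of_real (s1\<^sup>2) * outer h1 h1 $ i $ j)
    + (\<chi> i j. cnj c1 * outer h0 h1 $ i $ j) + (\<chi> i j. c1 * outer h1 h0 $ i $ j)
    + (\<chi> i j. complex_of_real (sn\<^sup>2) * mat 1 $ i $ j)"
    by (simp add: vec_eq_iff Rcov_def)
  show ?thesis
    unfolding Rcov_sum matrix_vector_mult_add_rdistrib outer_mult_vector scaled_mat_1_mult_vector
    by (simp add: vector_sadd_rdistrib algebra_simps)
qed

lemma Rcov_add_outer:
  assumes "0 \<le> s1\<^sup>2 + l"
  shows "Rcov s0 s1 c1 sn h0 h1 + (\<chi> i j. complex_of_real l * outer h1 h1 $ i $ j)
       = Rcov s0 (sqrt (s1\<^sup>2 + l)) c1 sn h0 h1"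
  using assms by (simp add: vec_eq_iff Rcov_def algebra_simps)

lemma Rcov_quadratic_form_ge:
  assumes "cmod c1 \<le> s0 * s1"
  shows "sn\<^sup>2 * (norm y)\<^sup>2 \<le> Re (hip y (Rcov s0 s1 c1 sn h0 h1 *v y))"
proof -
  define a where "a = hip h0 y"
  define b where "b = hip h1 y"
  define z where "z = c1 * a * cnj b"
  have ya: "hip y h0 = cnj a" "hip y h1 = cnj b"
    unfolding a_def b_def by (simp_all add: hip_cnj)
  have "hip y (Rcov s0 s1 c1 sn h0 h1 *v y)
      = complex_of_real (s0\<^sup>2) * (a * cnj a) + complex_of_real (s1\<^sup>2) * (b * cnj b)
        + complex_of_real (sn\<^sup>2) * hip y y + (z + cnj z)"
    unfolding Rcov_mult_vector hip_add_right hip_smult_right ya z_def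
    by (simp add: a_def b_def algebra_simps)
  then have "Re (hip y (Rcov s0 s1 c1 sn h0 h1 *v y))
      = s0\<^sup>2 * (cmod a)\<^sup>2 + s1\<^sup>2 * (cmod b)\<^sup>2 + sn\<^sup>2 * (norm y)\<^sup>2 + 2 * Re z"
    by (simp add: hip_self complex_norm_square[symmetric])
  moreover have "- (s0 * s1 * cmod a * cmod b) \<le> Re z"
  proof -
    have "cmod z = cmod c1 * cmod a * cmod b" by (simp add: z_def norm_mult)
    also have "\<dots> \<le> s0 * s1 * cmod a * cmod b" using assms by (simp add: mult_right_mono)
    finally show ?thesis using abs_Re_le_cmod[of z] by linarith
  qed
  moreover have "0 \<le> (s0 * cmod a - s1 * cmod b)\<^sup>2" by simp
  ultimately show ?thesis by (simp add: power2_eq_square algebra_simps)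
qed

lemma Rcov_definite:
  assumes "cmod c1 \<le> s0 * s1" "sn \<noteq> 0" "Re (hip y (Rcov s0 s1 c1 sn h0 h1 *v y)) \<le> 0"
  shows "y = 0"
proof -
  have "sn\<^sup>2 * (norm y)\<^sup>2 \<le> 0"
    using Rcov_quadratic_form_ge[OF assms(1)] assms(3) by (rule order_trans)
  then show ?thesis using assms(2) by (simp add: mult_le_0_iff)
qed

lemma Rcov_ker:
  assumes "cmod c1 \<le> s0 * s1" "sn \<noteq> 0" "Rcov s0 s1 c1 sn h0 h1 *v y = 0"
  shows "y = 0"
  using assms by (intro Rcov_definite[of c1 s0 s1 sn y h0 h1]) simp_all

lemma hip_unit_lincomb:
  assumes "norm h0 = 1" "norm h1 = 1"
  shows "hip h0 (\<alpha> *s h0 + \<beta> *s h1) = \<alpha> + \<beta> * hip h0 h1"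
    and "hip h1 (\<alpha> *s h0 + \<beta> *s h1) = \<alpha> * cnj (hip h0 h1) + \<beta>"
  using assms by (simp_all add: hip_linear hip_self hip_cnj)

lemma hip_lincomb_left: "hip (\<alpha> *s h0 + \<beta> *s h1) w = cnj \<alpha> * hip h0 w + cnj \<beta> * hip h1 w"
  by (simp add: hip_linear)

lemma lincomb_first_coeff:
  assumes "norm h0 = 1" "norm h1 = 1" "w = \<alpha> *s h0 + \<beta> *s h1"
  shows "\<alpha> * complex_of_real (1 - (cmod (hip h0 h1))\<^sup>2) = hip h0 w - hip h0 h1 * hip h1 w"
proof -
  have "hip h0 h1 * cnj (hip h0 h1) = complex_of_real ((cmod (hip h0 h1))\<^sup>2)"
    by (rule complex_norm_square[symmetric])
  then show ?thesis
    unfolding assms(3) hip_unit_lincomb[OF assms(1,2)] by (simp add: algebra_simps)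
qed

lemma unit_pair_independent:
  assumes "norm h0 = 1" "norm h1 = 1" "cmod (hip h0 h1) < 1" "\<alpha> *s h0 + \<beta> *s h1 = 0"
  shows "\<alpha> = 0" "\<beta> = 0"
proof -
  have "\<alpha> * complex_of_real (1 - (cmod (hip h0 h1))\<^sup>2) = 0"
    using lincomb_first_coeff[OF assms(1,2) assms(4)[symmetric]] by simp
  moreover have "1 - (cmod (hip h0 h1))\<^sup>2 \<noteq> 0"
    using assms(3) abs_square_less_1[of "cmod (hip h0 h1)"] by simp
  ultimately show "\<alpha> = 0" by (simp only: mult_eq_0_iff of_real_eq_0_iff) blast
  then show "\<beta> = 0" using assms(2,4) by auto
qed

lemma norm_sq_dual_lincomb:
  assumes "norm h0 = 1" "norm h1 = 1" "cmod (hip h0 h1) < 1" "w = \<alpha> *s h0 + \<beta> *s h1"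
    and "hip h0 w = 1" "hip h1 w = 0"
  shows "(norm w)\<^sup>2 = 1 / (1 - (cmod (hip h0 h1))\<^sup>2)"
proof -
  define c where "c = 1 - (cmod (hip h0 h1))\<^sup>2"
  have "c \<noteq> 0"
    using assms(3) abs_square_less_1[of "cmod (hip h0 h1)"] by (simp add: c_def)
  moreover have "\<alpha> * complex_of_real c = 1"
    using lincomb_first_coeff[OF assms(1,2,4)] assms(5,6) by (simp add: c_def)
  ultimately have \<alpha>: "\<alpha> = complex_of_real (1 / c)"
    by (simp add: field_simps)
  have "complex_of_real ((norm w)\<^sup>2) = cnj \<alpha>"
    unfolding hip_self[symmetric] by (subst (1) assms(4)) (simp add: hip_lincomb_left assms(5,6))
  then show ?thesis unfolding \<alpha> c_def by (metis complex_cnj_complex_of_real of_real_eq_iff)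
qed

lemma distortionless_lincomb:
  assumes "norm h0 = 1" "norm h1 = 1"
    and \<rho>_def: "\<rho> = hip h0 h1" and c2_def: "c2 = 1 - (cmod \<rho>)\<^sup>2"
    and w_def: "w = (1 - x * \<rho>) *s h0 + x *s h1"
  shows "hip h0 w = 1" and "hip h1 w = cnj \<rho> + x * complex_of_real c2"
    and "(norm w)\<^sup>2 = 1 + (cmod x)\<^sup>2 * c2"
proof -
  have \<rho>\<rho>: "\<rho> * cnj \<rho> = complex_of_real (1 - c2)"
    using complex_norm_square[of \<rho>] by (simp add: c2_def)
  show h0w: "hip h0 w = 1"
    unfolding w_def hip_unit_lincomb[OF assms(1,2)] \<rho>_def by simp
  have "hip h1 w = (1 - x * \<rho>) * cnj \<rho> + x"
    unfolding w_def hip_unit_lincomb[OF assms(1,2)] \<rho>_def ..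
  also have "\<dots> = cnj \<rho> + x * (1 - \<rho> * cnj \<rho>)"
    by (simp add: algebra_simps)
  finally show h1w: "hip h1 w = cnj \<rho> + x * complex_of_real c2"
    unfolding \<rho>\<rho> by simp
  have "hip w w = cnj (1 - x * \<rho>) * hip h0 w + cnj x * hip h1 w"
    by (subst (1) w_def) (rule hip_lincomb_left)
  then have "complex_of_real ((norm w)\<^sup>2) = cnj (1 - x * \<rho>) + cnj x * (cnj \<rho> + x * complex_of_real c2)"
    unfolding hip_self h0w h1w by simp
  also have "\<dots> = complex_of_real (1 + (cmod x)\<^sup>2 * c2)"
    using complex_norm_square[of x] by (simp add: algebra_simps)
  finally show "(norm w)\<^sup>2 = 1 + (cmod x)\<^sup>2 * c2"
    using of_real_eq_iff by blast
qed

lemma J_MSE_distortionless: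
  assumes "hip h0 w = 1"
  shows "J_MSE s0 s1 c1 sn h0 h1 w = s1\<^sup>2 * (cmod (hip h1 w))\<^sup>2 + sn\<^sup>2 * (norm w)\<^sup>2"
proof -
  have w: "hip w h0 = 1" "hip w h1 = cnj (hip h1 w)"
    using assms by (metis complex_cnj_one hip_cnj)+
  have "hip w (Rcov s0 s1 c1 sn h0 h1 *v w) - hip w (pcross s0 c1 h0 h1)
         - hip (pcross s0 c1 h0 h1) w + complex_of_real (s0\<^sup>2)
      = complex_of_real (s1\<^sup>2) * (hip h1 w * cnj (hip h1 w)) + complex_of_real (sn\<^sup>2) * hip w w"
    unfolding Rcov_mult_vector pcross_def hip_linear w assms by (simp add: algebra_simps)
  then show ?thesis
    unfolding J_MSE_def by (simp add: hip_self complex_norm_square[symmetric])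
qed

definition mvdr :: "complex ^ 'n ^ 'n \<Rightarrow> complex ^ 'n \<Rightarrow> complex ^ 'n" where
  "mvdr R h = (let v = matrix_inv R *v h in inverse (hip h v) *s v)"

lemma w_RZF_eq_mvdr:
  assumes "0 \<le> s1\<^sup>2 + l"
  shows "w_RZF s0 s1 c1 sn h0 h1 l = mvdr (Rcov s0 (sqrt (s1\<^sup>2 + l)) c1 sn h0 h1) h0"
  unfolding w_RZF_def mvdr_def Rcov_add_outer[OF assms] by simp

lemma mvdr_eqI:
  assumes ker: "\<And>x. R *v x = 0 \<Longrightarrow> x = 0" and "hip h w = 1" and "R *v w = \<kappa> *s h"
  shows "mvdr R h = w"
proof -
  have "\<kappa> \<noteq> 0"
    using assms(2,3) ker[of w] by auto
  then have "R *v (inverse \<kappa> *s w) = h"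
    by (simp add: matrix_vector_mult_smult assms(3))
  then have "matrix_inv R *v h = inverse \<kappa> *s w"
    using matrix_inv_mult_vector_eqI[of R] ker by blast
  then show ?thesis
    unfolding mvdr_def Let_def using \<open>\<kappa> \<noteq> 0\<close> by (simp add: hip_smult_right assms(2))
qed

lemma mvdr_Rcov:
  assumes "norm h0 = 1" "norm h1 = 1" "cmod c1 \<le> s0 * s1" "sn \<noteq> 0"
    and \<rho>_def: "\<rho> = hip h0 h1" "cmod \<rho> \<le> 1" and c2_def: "c2 = 1 - (cmod \<rho>)\<^sup>2"
    and x_def: "x = - (complex_of_real (s1\<^sup>2) * cnj \<rho> + c1) / complex_of_real (s1\<^sup>2 * c2 + sn\<^sup>2)"
  shows "mvdr (Rcov s0 s1 c1 sn h0 h1) h0 = (1 - x * \<rho>) *s h0 + x *s h1"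
proof (rule mvdr_eqI)
  (* x is chosen so that the h1-component of R w vanishes *)
  define w where "w = (1 - x * \<rho>) *s h0 + x *s h1"
  define b where "b = cnj \<rho> + x * complex_of_real c2"
  have h0w: "hip h0 w = 1" and h1w: "hip h1 w = b"
    using distortionless_lincomb[OF assms(1,2) \<rho>_def(1) c2_def w_def] unfolding b_def by simp_all
  define G where "G = s1\<^sup>2 * c2 + sn\<^sup>2"
  have "0 < G"
    using assms(4) \<rho>_def(2) abs_square_le_1[of "cmod \<rho>"]
    by (simp add: G_def c2_def add_nonneg_pos)
  moreover have "x = - (complex_of_real (s1\<^sup>2) * cnj \<rho> + c1) / complex_of_real G"
    unfolding x_def G_def ..
  ultimately have "complex_of_real (s1\<^sup>2) * cnj \<rho> + c1 + x * complex_of_real G = 0"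
    by simp
  moreover have "complex_of_real (s1\<^sup>2) * b + c1 + complex_of_real (sn\<^sup>2) * x
      = complex_of_real (s1\<^sup>2) * cnj \<rho> + c1 + x * complex_of_real G"
    unfolding b_def G_def by (simp add: algebra_simps)
  ultimately have coeff_h1: "complex_of_real (s1\<^sup>2) * b + c1 + complex_of_real (sn\<^sup>2) * x = 0"
    by simp
  have "Rcov s0 s1 c1 sn h0 h1 *v w
      = (complex_of_real (s0\<^sup>2) + cnj c1 * b + complex_of_real (sn\<^sup>2) * (1 - x * \<rho>)) *s h0
      + (complex_of_real (s1\<^sup>2) * b + c1 + complex_of_real (sn\<^sup>2) * x) *s h1"
    unfolding Rcov_mult_vector h0w h1w by (simp add: w_def vec_eq_iff algebra_simps)
  then show "Rcov s0 s1 c1 sn h0 h1 *v ((1 - x * \<rho>) *s h0 + x *s h1)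
      = (complex_of_real (s0\<^sup>2) + cnj c1 * b + complex_of_real (sn\<^sup>2) * (1 - x * \<rho>)) *s h0"
    unfolding coeff_h1 w_def by simp
  show "hip h0 ((1 - x * \<rho>) *s h0 + x *s h1) = 1"
    using h0w unfolding w_def .
qed (use assms(3,4) Rcov_ker in blast)

lemma MSE_lincomb_form:
  assumes "norm h0 = 1" "norm h1 = 1" "cmod c1 \<le> s0 * s1" "0 \<le> s0" "sn \<noteq> 0" "0 \<le> l"
    and \<rho>_def: "\<rho> = hip h0 h1" "cmod \<rho> \<le> 1" and c2_def: "c2 = 1 - (cmod \<rho>)\<^sup>2"
    and x_def: "x = - (complex_of_real (s1\<^sup>2 + l) * cnj \<rho> + c1)
                    / complex_of_real ((s1\<^sup>2 + l) * c2 + sn\<^sup>2)"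
  shows "MSE s0 s1 c1 sn h0 h1 l
       = s1\<^sup>2 * (cmod (cnj \<rho> + x * complex_of_real c2))\<^sup>2 + sn\<^sup>2 * (1 + (cmod x)\<^sup>2 * c2)"
proof -
  define s1' where "s1' = sqrt (s1\<^sup>2 + l)"
  have s1'_sq: "s1'\<^sup>2 = s1\<^sup>2 + l"
    unfolding s1'_def using assms(6) by simp
  have "s1 \<le> s1'"
    unfolding s1'_def using assms(6) by (intro real_le_rsqrt) simp
  then have "cmod c1 \<le> s0 * s1'"
    using assms(3,4) by (meson mult_left_mono order_trans)
  define w where "w = (1 - x * \<rho>) *s h0 + x *s h1"
  note w_props = distortionless_lincomb[OF assms(1,2) \<rho>_def(1) c2_def w_def]
  have "w_RZF s0 s1 c1 sn h0 h1 l = mvdr (Rcov s0 s1' c1 sn h0 h1) h0"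
    unfolding s1'_def using assms(6) by (intro w_RZF_eq_mvdr) simp
  also have "\<dots> = w"
    unfolding w_def
    by (rule mvdr_Rcov[OF assms(1,2) \<open>cmod c1 \<le> s0 * s1'\<close> assms(5) \<rho>_def c2_def])
      (simp add: s1'_sq x_def)
  finally have "w_RZF s0 s1 c1 sn h0 h1 l = w" .
  then show ?thesis
    by (simp add: MSE_def J_MSE_distortionless[OF w_props(1)] w_props(2,3))
qed

lemma Hmat_mult_vector: "Hmat h0 h1 *v u = u $ 1 *s h0 + u $ 2 *s h1"
  by (simp add: vec_eq_iff matrix_vector_mult_def Hmat_def sum_2 mult.commute)

lemma ctrans_Hmat_mult_vector:
  "(ctrans (Hmat h0 h1) *v y) $ k = (if k = 1 then hip h0 y else hip h1 y)"
  by (simp add: matrix_vector_mult_def Hmat_def ctrans_def hip_def)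

lemma w_ZF_constraints:
  assumes "norm h0 = 1" "norm h1 = 1" "cmod (hip h0 h1) < 1" "cmod c1 \<le> s0 * s1" "sn \<noteq> 0"
  obtains u where "Rcov s0 s1 c1 sn h0 h1 *v w_ZF s0 s1 c1 sn h0 h1 = Hmat h0 h1 *v u"
    and "hip h0 (w_ZF s0 s1 c1 sn h0 h1) = 1" and "hip h1 (w_ZF s0 s1 c1 sn h0 h1) = 0"
proof -
  define R where "R = Rcov s0 s1 c1 sn h0 h1"
  define H where "H = Hmat h0 h1"
  define A where "A = ctrans H ** matrix_inv R ** H"
  have R_ker: "y = 0" if "R *v y = 0" for y
    using Rcov_ker[OF assms(4,5)] that unfolding R_def .
  have R_inv: "R *v (matrix_inv R *v z) = z" for z
    using R_ker by (rule matrix_inv_mult_vector_cancel)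
  have A_mult: "A *v v = ctrans H *v (matrix_inv R *v (H *v v))" for v
    unfolding A_def by (simp only: matrix_vector_mul_assoc matrix_mul_assoc)
  have A_ker: "u = 0" if "A *v u = 0" for u
  proof -
    define y where "y = matrix_inv R *v (H *v u)"
    have Ry: "R *v y = u $ 1 *s h0 + u $ 2 *s h1"
      unfolding y_def R_inv H_def Hmat_mult_vector ..
    have "ctrans H *v y = 0"
      using that unfolding y_def A_mult .
    then have "(ctrans H *v y) $ 1 = 0" "(ctrans H *v y) $ 2 = 0"
      by simp_all
    then have "hip h0 y = 0" "hip h1 y = 0"
      unfolding H_def ctrans_Hmat_mult_vector by simp_all
    then have "hip y h0 = 0" "hip y h1 = 0"
      by (metis complex_cnj_zero hip_cnj)+
    then have "Re (hip y (R *v y)) \<le> 0"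
      unfolding Ry by (simp add: hip_linear)
    then have "y = 0"
      using Rcov_definite[OF assms(4,5)] unfolding R_def by blast
    then have "u $ 1 *s h0 + u $ 2 *s h1 = 0"
      using Ry by simp
    then have "u $ 1 = 0" "u $ 2 = 0"
      by (rule unit_pair_independent[OF assms(1-3)])+
    then show "u = 0"
      by (simp add: vec_eq_iff forall_2)
  qed
  define u where "u = matrix_inv A *v e1"
  have w: "w_ZF s0 s1 c1 sn h0 h1 = matrix_inv R *v (H *v u)"
    unfolding w_ZF_def Let_def R_def[symmetric] H_def[symmetric] A_def[symmetric] u_def
    by (simp only: matrix_vector_mul_assoc matrix_mul_assoc)
  have "ctrans H *v w_ZF s0 s1 c1 sn h0 h1 = A *v u"
    unfolding w A_mult ..
  also have "\<dots> = e1"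
    unfolding u_def by (rule matrix_inv_mult_vector_cancel[OF A_ker])
  finally have "ctrans H *v w_ZF s0 s1 c1 sn h0 h1 = e1" .
  then have "(ctrans H *v w_ZF s0 s1 c1 sn h0 h1) $ 1 = 1"
    "(ctrans H *v w_ZF s0 s1 c1 sn h0 h1) $ 2 = 0"
    by (simp_all add: e1_def)
  then have "hip h0 (w_ZF s0 s1 c1 sn h0 h1) = 1" "hip h1 (w_ZF s0 s1 c1 sn h0 h1) = 0"
    unfolding H_def ctrans_Hmat_mult_vector by simp_all
  moreover have "R *v w_ZF s0 s1 c1 sn h0 h1 = H *v u"
    unfolding w R_inv ..
  ultimately show ?thesis
    using that unfolding R_def H_def by blast
qed

lemma J_MSE_w_ZF:
  assumes "norm h0 = 1" "norm h1 = 1" "cmod (hip h0 h1) < 1" "cmod c1 \<le> s0 * s1" "sn \<noteq> 0"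
  shows "J_MSE s0 s1 c1 sn h0 h1 (w_ZF s0 s1 c1 sn h0 h1) = sn\<^sup>2 / (1 - (cmod (hip h0 h1))\<^sup>2)"
proof -
  define w where "w = w_ZF s0 s1 c1 sn h0 h1"
  obtain u where Rw: "Rcov s0 s1 c1 sn h0 h1 *v w = Hmat h0 h1 *v u"
    and hw: "hip h0 w = 1" "hip h1 w = 0"
    using w_ZF_constraints[OF assms] unfolding w_def by blast
  define k where "k = inverse (complex_of_real (sn\<^sup>2))"
  have "complex_of_real (sn\<^sup>2) *s w
      = (u $ 1 - complex_of_real (s0\<^sup>2)) *s h0 + (u $ 2 - c1) *s h1"
    using Rw unfolding Rcov_mult_vector Hmat_mult_vector hw
    by (simp add: vec_eq_iff algebra_simps)
  moreover have "w = k *s (complex_of_real (sn\<^sup>2) *s w)"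
    using assms(5) by (simp add: k_def vector_smult_assoc)
  ultimately have "w = (k * (u $ 1 - complex_of_real (s0\<^sup>2))) *s h0 + (k * (u $ 2 - c1)) *s h1"
    by (simp only: vector_add_ldistrib vector_smult_assoc)
  then have "(norm w)\<^sup>2 = 1 / (1 - (cmod (hip h0 h1))\<^sup>2)"
    using norm_sq_dual_lincomb[OF assms(1-3) _ hw] by blast
  then show ?thesis
    unfolding w_def[symmetric] J_MSE_distortionless[OF hw(1)] hw(2) by simp
qed

lemma cmod_diff_of_real_sq: "(cmod (z - complex_of_real r))\<^sup>2 = (cmod z)\<^sup>2 - 2 * r * Re z + r\<^sup>2"
  by (simp only: cmod_power2) (simp add: power2_eq_square algebra_simps)

lemma lincomb_form_polar:
  fixes S C t m s sn s1 G \<phi>z \<phi>c \<delta>1 :: real and \<rho> c1 x \<delta>2 :: complex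
  assumes C: "C > 0" and t: "t = S / C"
    and \<rho>: "\<rho> = complex_of_real S * cis \<phi>z" and c1: "c1 = complex_of_real m * cis \<phi>c"
    and G: "G = s * C\<^sup>2 + sn\<^sup>2" "G > 0"
    and x: "x = - (complex_of_real s * cnj \<rho> + c1) / complex_of_real G"
    and \<delta>2: "\<delta>2 = complex_of_real (sn\<^sup>2 * t) - complex_of_real (m * C) * cis (\<phi>c + \<phi>z)"
    and \<delta>1: "\<delta>1 = sn\<^sup>2 * t - m * C * cos (\<phi>c + \<phi>z)"
  shows "s1\<^sup>2 * (cmod (cnj \<rho> + x * complex_of_real (C\<^sup>2)))\<^sup>2 + sn\<^sup>2 * (1 + (cmod x)\<^sup>2 * C\<^sup>2)
       = (cmod \<delta>2)\<^sup>2 * (s1\<^sup>2 * C\<^sup>2 + sn\<^sup>2) / G\<^sup>2 - 2 * sn\<^sup>2 * \<delta>1 * t / G + sn\<^sup>2 * (t\<^sup>2 + 1)"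
proof -
  have Gx: "complex_of_real G * x = - (complex_of_real s * cnj \<rho> + c1)"
    using G(2) x by simp
  have S: "complex_of_real S = complex_of_real C * complex_of_real t"
    using t C by simp
  have cis: "cis \<phi>c = cis (-\<phi>z) * cis (\<phi>c + \<phi>z)"
    by (simp add: cis_mult)
  have "complex_of_real G * (cnj \<rho> + x * complex_of_real (C\<^sup>2))
      = complex_of_real G * cnj \<rho> + (complex_of_real G * x) * complex_of_real (C\<^sup>2)"
    by (simp add: algebra_simps)
  also have "\<dots> = cis (-\<phi>z) * (complex_of_real C * \<delta>2)"
    unfolding Gx unfolding G(1) \<rho> c1 \<delta>2 cis S by (simp add: cis_cnj algebra_simps power2_eq_square)
  finally have "G * cmod (cnj \<rho> + x * complex_of_real (C\<^sup>2)) = C * cmod \<delta>2"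
    using G(2) C by (metis (no_types, lifting) abs_of_pos norm_cis norm_mult norm_of_real mult_1)
  then have n1: "cmod (cnj \<rho> + x * complex_of_real (C\<^sup>2)) = C * cmod \<delta>2 / G"
    using G(2) by (simp add: field_simps)
  have "complex_of_real C * (complex_of_real G * x) = cis (-\<phi>z) * (\<delta>2 - complex_of_real (t * G))"
    unfolding Gx unfolding G(1) \<rho> c1 \<delta>2 cis S by (simp add: cis_cnj algebra_simps power2_eq_square)
  then have "C * (G * cmod x) = cmod (\<delta>2 - complex_of_real (t * G))"
    using G(2) C by (metis (no_types, lifting) abs_of_pos norm_cis norm_mult norm_of_real mult_1)
  then have n2: "(cmod x)\<^sup>2 * C\<^sup>2 = (cmod (\<delta>2 - complex_of_real (t * G)))\<^sup>2 / G\<^sup>2"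
    using G(2) by (simp add: field_simps power2_eq_square) (metis mult.commute mult.left_commute)
  have "Re \<delta>2 = \<delta>1"
    unfolding \<delta>2 \<delta>1 by simp
  then show ?thesis
    unfolding n1 n2 cmod_diff_of_real_sq using G(2) C by (simp add: field_simps power2_eq_square)
qed

lemma sin_cis_correlation:
  assumes "0 \<le> \<tau>" "\<tau> < pi / 2" "\<rho> = complex_of_real (sin \<tau>) * cis \<phi>"
  shows "cmod \<rho> < 1" and "1 - (cmod \<rho>)\<^sup>2 = (cos \<tau>)\<^sup>2"
proof -
  have "0 \<le> sin \<tau>" "0 < cos \<tau>"
    using assms(1,2) by (auto intro!: sin_ge_zero cos_gt_zero_pi)
  moreover have \<rho>: "cmod \<rho> = sin \<tau>"
    using \<open>0 \<le> sin \<tau>\<close> by (simp add: assms(3) norm_mult)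
  ultimately show c2: "1 - (cmod \<rho>)\<^sup>2 = (cos \<tau>)\<^sup>2"
    by (simp add: cos_squared_eq)
  have "(cmod \<rho>)\<^sup>2 < 1"
    using c2 \<open>0 < cos \<tau>\<close> by (smt (verit) zero_less_power)
  then show "cmod \<rho> < 1"
    by (simp add: abs_square_less_1)
qed

lemma inverse_cos_square: "cos \<tau> \<noteq> 0 \<Longrightarrow> 1 / (cos \<tau>)\<^sup>2 = (tan \<tau>)\<^sup>2 + 1"
  using sin_cos_squared_add[of \<tau>] by (simp add: tan_def field_simps)

lemma J_MSE_w_ZF_polar:
  assumes "norm h0 = 1" "norm h1 = 1" "hip h0 h1 = complex_of_real (sin \<tau>) * cis \<phi>z"
    and "0 \<le> \<tau>" "\<tau> < pi / 2" "cmod c1 \<le> \<sigma>0 * \<sigma>1" "0 < \<sigma>n"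
  shows "J_MSE \<sigma>0 \<sigma>1 c1 \<sigma>n h0 h1 (w_ZF \<sigma>0 \<sigma>1 c1 \<sigma>n h0 h1) = \<sigma>n\<^sup>2 * ((tan \<tau>)\<^sup>2 + 1)"
proof -
  note \<rho> = sin_cis_correlation[OF assms(4,5,3)]
  have "cos \<tau> \<noteq> 0"
    using assms(4,5) cos_gt_zero_pi[of \<tau>] by simp
  then show ?thesis
    using J_MSE_w_ZF[OF assms(1,2) \<rho>(1) assms(6)] assms(7)
    by (simp add: \<rho>(2) inverse_cos_square[symmetric])
qed

lemma MSE_polar_form:
  fixes h0 h1 :: "complex ^ 'n"
  assumes "norm h0 = 1" "norm h1 = 1" "hip h0 h1 = complex_of_real (sin \<tau>) * cis \<phi>z"
    and "0 \<le> \<tau>" "\<tau> < pi / 2" "0 < \<sigma>0" "0 < \<sigma>n"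
    and "c1 = complex_of_real (cmod c1) * cis \<phi>c" "cmod c1 \<le> \<sigma>0 * \<sigma>1" and "0 \<le> l"
  defines "\<delta>1 \<equiv> \<sigma>n\<^sup>2 * tan \<tau> - cmod c1 * cos \<tau> * cos (\<phi>c + \<phi>z)"
    and "\<delta>2 \<equiv> complex_of_real (\<sigma>n\<^sup>2 * tan \<tau>)
                - complex_of_real (cmod c1 * cos \<tau>) * cis (\<phi>c + \<phi>z)"
    and "G \<equiv> l * (cos \<tau>)\<^sup>2 + \<sigma>1\<^sup>2 * (cos \<tau>)\<^sup>2 + \<sigma>n\<^sup>2"
  shows "MSE \<sigma>0 \<sigma>1 c1 \<sigma>n h0 h1 l = (cmod \<delta>2)\<^sup>2 * (\<sigma>1\<^sup>2 * (cos \<tau>)\<^sup>2 + \<sigma>n\<^sup>2) / G\<^sup>2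
                                   - 2 * \<sigma>n\<^sup>2 * \<delta>1 * tan \<tau> / G + \<sigma>n\<^sup>2 * ((tan \<tau>)\<^sup>2 + 1)"
proof -
  define \<rho> where "\<rho> = hip h0 h1"
  define x where "x = - (complex_of_real (\<sigma>1\<^sup>2 + l) * cnj \<rho> + c1)
                       / complex_of_real ((\<sigma>1\<^sup>2 + l) * (cos \<tau>)\<^sup>2 + \<sigma>n\<^sup>2)"
  note \<rho>_facts = sin_cis_correlation[OF assms(4,5) assms(3)[folded \<rho>_def]]
  have G: "G = (\<sigma>1\<^sup>2 + l) * (cos \<tau>)\<^sup>2 + \<sigma>n\<^sup>2"
    unfolding G_def by (simp add: algebra_simps)
  have "0 < G"
    unfolding G_def using assms(7,10) by (intro add_nonneg_pos add_nonneg_nonneg) simp_all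
  have "MSE \<sigma>0 \<sigma>1 c1 \<sigma>n h0 h1 l
      = \<sigma>1\<^sup>2 * (cmod (cnj \<rho> + x * complex_of_real ((cos \<tau>)\<^sup>2)))\<^sup>2
        + \<sigma>n\<^sup>2 * (1 + (cmod x)\<^sup>2 * (cos \<tau>)\<^sup>2)"
    using MSE_lincomb_form[OF assms(1,2,9) _ _ assms(10) \<rho>_def _ \<rho>_facts(2)[symmetric]] x_def
      assms(6,7) \<rho>_facts(1) by simp
  also have "\<dots> = (cmod \<delta>2)\<^sup>2 * (\<sigma>1\<^sup>2 * (cos \<tau>)\<^sup>2 + \<sigma>n\<^sup>2) / G\<^sup>2
                  - 2 * \<sigma>n\<^sup>2 * \<delta>1 * tan \<tau> / G + \<sigma>n\<^sup>2 * ((tan \<tau>)\<^sup>2 + 1)"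
    using assms(4,5) cos_gt_zero_pi[of \<tau>]
    by (intro lincomb_form_polar[where \<phi>z = \<phi>z and \<phi>c = \<phi>c, OF _ _ _ assms(8) G \<open>0 < G\<close>])
      (simp_all add: tan_def \<rho>_def assms(3) x_def G[symmetric] \<delta>1_def \<delta>2_def)
  finally show ?thesis .
qed

locale reciprocal_square_profile =
  fixes M :: "real \<Rightarrow> real" and A B c g0 \<gamma> :: real
  assumes A_pos: "0 < A" and c_pos: "0 < c" and g0_pos: "0 < g0"
    and M_eq: "\<And>l. 0 \<le> l \<Longrightarrow> M l = A * (g0 / (c * l + g0) - \<gamma>)\<^sup>2 + B"
begin

lemma ratio_antimono:
  assumes "0 \<le> x" "x \<le> y"
  shows "0 < g0 / (c * y + g0)" "g0 / (c * y + g0) \<le> g0 / (c * x + g0)" "g0 / (c * x + g0) \<le> 1"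
proof -
  have "0 < c * x + g0" "c * x + g0 \<le> c * y + g0" "g0 \<le> c * x + g0"
    using assms c_pos g0_pos by (simp_all add: add_nonneg_pos mult_left_mono)
  then show "0 < g0 / (c * y + g0)" "g0 / (c * y + g0) \<le> g0 / (c * x + g0)" "g0 / (c * x + g0) \<le> 1"
    using g0_pos by (simp_all add: frac_le)
qed

lemma antimono_if_nonpos:
  assumes "\<gamma> \<le> 0" "0 \<le> x" "x \<le> y"
  shows "M y \<le> M x"
proof -
  have "(g0 / (c * y + g0) - \<gamma>)\<^sup>2 \<le> (g0 / (c * x + g0) - \<gamma>)\<^sup>2"
    using ratio_antimono[OF assms(2,3)] assms(1) by (intro power_mono) auto
  then show ?thesis
    using assms A_pos by (simp add: M_eq)
qed

lemma mono_if_ge_1: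
  assumes "1 \<le> \<gamma>" "0 \<le> x" "x \<le> y"
  shows "M x \<le> M y"
proof -
  have "(\<gamma> - g0 / (c * x + g0))\<^sup>2 \<le> (\<gamma> - g0 / (c * y + g0))\<^sup>2"
    using ratio_antimono[OF assms(2,3)] assms(1) by (intro power_mono) auto
  then show ?thesis
    using assms A_pos by (simp add: M_eq power2_commute)
qed

lemma tendsto_at_top: "(M \<longlongrightarrow> A * \<gamma>\<^sup>2 + B) at_top"
proof -
  have "filterlim (\<lambda>l. g0 + c * l) at_top at_top"
    using c_pos by (intro filterlim_tendsto_add_at_top[OF tendsto_const]
        filterlim_tendsto_pos_mult_at_top[OF tendsto_const _ filterlim_ident])
  then have "filterlim (\<lambda>l. c * l + g0) at_top at_top"
    by (simp add: add.commute)
  then have "((\<lambda>l. A * (g0 / (c * l + g0) - \<gamma>)\<^sup>2 + B) \<longlongrightarrow> A * (0 - \<gamma>)\<^sup>2 + B) at_top"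
    by (intro tendsto_intros tendsto_divide_0[OF tendsto_const]) (rule filterlim_at_top_imp_at_infinity)
  moreover have "\<forall>\<^sub>F l in at_top. A * (g0 / (c * l + g0) - \<gamma>)\<^sup>2 + B = M l"
    using eventually_ge_at_top[of 0] by eventually_elim (simp add: M_eq)
  ultimately show ?thesis
    by (simp add: tendsto_cong)
qed

lemma lower_bound_if_nonpos:
  assumes "\<gamma> \<le> 0" "0 \<le> l"
  shows "A * \<gamma>\<^sup>2 + B \<le> M l"
proof -
  have "(- \<gamma>)\<^sup>2 \<le> (g0 / (c * l + g0) - \<gamma>)\<^sup>2"
    using ratio_antimono[OF assms(2) order_refl] assms(1) by (intro power_mono) auto
  then show ?thesis
    using assms A_pos by (simp add: M_eq)
qed

lemma INF_if_nonpos: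
  assumes "\<gamma> \<le> 0"
  shows "(INF l\<in>{0..}. M l) = A * \<gamma>\<^sup>2 + B"
proof (rule antisym)
  have bdd: "bdd_below (M ` {0..})"
    using lower_bound_if_nonpos[OF assms] by (intro bdd_belowI2) auto
  have "\<forall>\<^sub>F l in at_top. (INF l\<in>{0..}. M l) \<le> M l"
    using eventually_ge_at_top[of 0] by eventually_elim (auto intro: cINF_lower bdd)
  then show "(INF l\<in>{0..}. M l) \<le> A * \<gamma>\<^sup>2 + B"
    by (intro tendsto_lowerbound[OF tendsto_at_top]) simp_all
  show "A * \<gamma>\<^sup>2 + B \<le> (INF l\<in>{0..}. M l)"
    using lower_bound_if_nonpos[OF assms] by (intro cINF_greatest) auto
qed

lemma argmin_if_between:
  assumes "0 < \<gamma>" "\<gamma> < 1"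
  defines "lopt \<equiv> g0 / c * ((1 - \<gamma>) / \<gamma>)"
  shows "0 < lopt" and "0 \<le> l \<Longrightarrow> M lopt \<le> M l"
proof -
  show "0 < lopt"
    unfolding lopt_def using assms(1,2) c_pos g0_pos by simp
  have "g0 / (c * lopt + g0) = \<gamma>"
    unfolding lopt_def using assms(1) c_pos g0_pos by (simp add: field_simps)
  then show "M lopt \<le> M l" if "0 \<le> l"
    using that \<open>0 < lopt\<close> A_pos by (simp add: M_eq)
qed

lemma monotonicity_and_minimum:
  "(\<gamma> \<le> 0 \<longrightarrow>
      (\<forall>x y. 0 \<le> x \<longrightarrow> x \<le> y \<longrightarrow> M y \<le> M x)
      \<and> (M \<longlongrightarrow> A * \<gamma>\<^sup>2 + B) at_top
      \<and> (INF l\<in>{0..}. M l) = A * \<gamma>\<^sup>2 + B)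
   \<and> (\<gamma> \<ge> 1 \<longrightarrow> (\<forall>x y. 0 \<le> x \<longrightarrow> x \<le> y \<longrightarrow> M x \<le> M y) \<and> (\<forall>l\<ge>0. M 0 \<le> M l))
   \<and> (0 < \<gamma> \<and> \<gamma> < 1 \<longrightarrow>
      (let lopt = g0 / c * ((1 - \<gamma>) / \<gamma>) in lopt > 0 \<and> (\<forall>l\<ge>0. M lopt \<le> M l)))"
  using antimono_if_nonpos tendsto_at_top INF_if_nonpos mono_if_ge_1[of 0] mono_if_ge_1
    argmin_if_between by (auto simp: Let_def)

end

lemma reciprocal_square_profileI:
  fixes M :: "real \<Rightarrow> real"
  assumes M_eq: "\<And>l. 0 \<le> l \<Longrightarrow> M l = D * g0 / (c * l + g0)\<^sup>2 - 2 * Q / (c * l + g0) + K"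
    and "0 < D" "0 < c" "0 < g0"
  shows "reciprocal_square_profile M (D / g0) (K - D / g0 * (Q / D)\<^sup>2) c g0 (Q / D)"
proof
  show "0 < D / g0" "0 < c" "0 < g0"
    using assms(2-4) by simp_all
  fix l :: real
  assume "0 \<le> l"
  define G where "G = c * l + g0"
  have "0 < G"
    unfolding G_def using \<open>0 \<le> l\<close> assms(3,4) by (intro add_nonneg_pos) simp_all
  then have "D / g0 * (g0 / G - Q / D)\<^sup>2 + (K - D / g0 * (Q / D)\<^sup>2) = D * g0 / G\<^sup>2 - 2 * Q / G + K"
    using assms(2,4) by (simp add: field_simps power2_eq_square)
  then show "M l = D / g0 * (g0 / (c * l + g0) - Q / D)\<^sup>2 + (K - D / g0 * (Q / D)\<^sup>2)"
    unfolding M_eq[OF \<open>0 \<le> l\<close>] G_def by simp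
qed

theorem theorem3:
  fixes h0 h1 :: "complex ^ 'n"
    and \<sigma>0 \<sigma>1 \<sigma>n \<tau> \<phi>z \<phi>c :: real
    and c1 :: complex
  assumes N2: "CARD('n) \<ge> 2"
    and nh0: "norm h0 = 1" and nh1: "norm h1 = 1"
    and corr: "hip h0 h1 = complex_of_real (sin \<tau>) * cis \<phi>z"
    and tau: "0 \<le> \<tau>" "\<tau> < pi / 2"
    and phiz: "0 \<le> \<phi>z" "\<phi>z < 2 * pi"
    and sig: "\<sigma>0 > 0" "\<sigma>1 > 0" "\<sigma>n > 0"
    and c1: "c1 = complex_of_real (cmod c1) * cis \<phi>c" "cmod c1 \<le> \<sigma>0 * \<sigma>1"
    and phic: "0 \<le> \<phi>c" "\<phi>c < 2 * pi"
  defines "M \<equiv> MSE \<sigma>0 \<sigma>1 c1 \<sigma>n h0 h1"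
    and "g \<equiv> (\<lambda>l::real. l * (cos \<tau>)\<^sup>2 + \<sigma>1\<^sup>2 * (cos \<tau>)\<^sup>2 + \<sigma>n\<^sup>2)"
    and "\<delta>1 \<equiv> \<sigma>n\<^sup>2 * tan \<tau> - cmod c1 * cos \<tau> * cos (\<phi>c + \<phi>z)"
    and "\<delta>2 \<equiv> complex_of_real (\<sigma>n\<^sup>2 * tan \<tau>)
                - complex_of_real (cmod c1 * cos \<tau>) * cis (\<phi>c + \<phi>z)"
    and "\<gamma> \<equiv> (\<sigma>n\<^sup>2 * tan \<tau> - cmod c1 * cos \<tau> * cos (\<phi>c + \<phi>z)) * \<sigma>n\<^sup>2 * tan \<tau>
              / (cmod (complex_of_real (\<sigma>n\<^sup>2 * tan \<tau>)
                   - complex_of_real (cmod c1 * cos \<tau>) * cis (\<phi>c + \<phi>z)))\<^sup>2"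
  shows "(\<forall>l\<ge>0. M l = (cmod \<delta>2)\<^sup>2 * (\<sigma>1\<^sup>2 * (cos \<tau>)\<^sup>2 + \<sigma>n\<^sup>2) / (g l)\<^sup>2
                     - 2 * \<sigma>n\<^sup>2 * \<delta>1 * tan \<tau> / g l + \<sigma>n\<^sup>2 * ((tan \<tau>)\<^sup>2 + 1))
    \<and> (\<delta>2 = 0 \<longrightarrow> \<delta>1 = 0 \<and> (\<forall>l\<ge>0. M l = \<sigma>n\<^sup>2 * ((tan \<tau>)\<^sup>2 + 1)))
    \<and> (\<delta>2 \<noteq> 0 \<longrightarrow>
         ((\<gamma> \<le> 0 \<longleftrightarrow> \<delta>1 * tan \<tau> \<le> 0)
          \<and> (\<gamma> \<le> 0 \<longrightarrow>
               (\<forall>x y. 0 \<le> x \<longrightarrow> x \<le> y \<longrightarrow> M y \<le> M x)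
               \<and> (M \<longlongrightarrow> J_MSE \<sigma>0 \<sigma>1 c1 \<sigma>n h0 h1 (w_ZF \<sigma>0 \<sigma>1 c1 \<sigma>n h0 h1)) at_top
               \<and> (INF l\<in>{0..}. M l) = J_MSE \<sigma>0 \<sigma>1 c1 \<sigma>n h0 h1 (w_ZF \<sigma>0 \<sigma>1 c1 \<sigma>n h0 h1))
          \<and> (\<gamma> \<ge> 1 \<longrightarrow>
               (\<forall>x y. 0 \<le> x \<longrightarrow> x \<le> y \<longrightarrow> M x \<le> M y)
               \<and> (\<forall>l\<ge>0. M 0 \<le> M l))
          \<and> (0 < \<gamma> \<and> \<gamma> < 1 \<longrightarrow>
               (let lopt = (\<sigma>1\<^sup>2 * (cos \<tau>)\<^sup>2 + \<sigma>n\<^sup>2) / (cos \<tau>)\<^sup>2 * ((1 - \<gamma>) / \<gamma>)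
                in lopt > 0 \<and> (\<forall>l\<ge>0. M lopt \<le> M l)))))"
proof -
  define D where "D = (cmod \<delta>2)\<^sup>2"
  define g0 where "g0 = \<sigma>1\<^sup>2 * (cos \<tau>)\<^sup>2 + \<sigma>n\<^sup>2"
  define Q where "Q = \<sigma>n\<^sup>2 * (\<delta>1 * tan \<tau>)"
  define K where "K = \<sigma>n\<^sup>2 * ((tan \<tau>)\<^sup>2 + 1)"
  have closed_form: "\<forall>l\<ge>0. M l = D * g0 / (g l)\<^sup>2 - 2 * \<sigma>n\<^sup>2 * \<delta>1 * tan \<tau> / g l + K"
    using MSE_polar_form[OF nh0 nh1 corr tau sig(1,3) c1]
    unfolding M_def g_def \<delta>1_def \<delta>2_def D_def g0_def K_def by simp
  have "\<delta>1 = Re \<delta>2"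
    unfolding \<delta>1_def \<delta>2_def by simp
  then have degenerate: "\<delta>2 = 0 \<longrightarrow> \<delta>1 = 0 \<and> (\<forall>l\<ge>0. M l = K)"
    using closed_form by (simp add: D_def)
  have \<gamma>: "\<gamma> = Q / D"
    unfolding \<gamma>_def Q_def D_def \<delta>1_def \<delta>2_def by (simp add: ac_simps)
  have g: "g l = (cos \<tau>)\<^sup>2 * l + g0" for l
    unfolding g_def g0_def by (simp add: algebra_simps)
  have "0 < cos \<tau>" "0 < g0"
    using tau sig(3) unfolding g0_def by (auto intro!: cos_gt_zero_pi add_nonneg_pos)
  then have profile: "reciprocal_square_profile M (D / g0) (K - D / g0 * \<gamma>\<^sup>2) ((cos \<tau>)\<^sup>2) g0 \<gamma>"
    if "\<delta>2 \<noteq> 0"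
    unfolding \<gamma> using closed_form that
    by (intro reciprocal_square_profileI) (auto simp: g Q_def D_def mult.assoc)
  have sign: "\<gamma> \<le> 0 \<longleftrightarrow> \<delta>1 * tan \<tau> \<le> 0" if "\<delta>2 \<noteq> 0"
    using that sig(3) mult_le_cancel_left_pos[of "\<sigma>n\<^sup>2" "\<delta>1 * tan \<tau>" 0]
    by (simp add: \<gamma> Q_def D_def divide_le_0_iff)
  show ?thesis
    unfolding D_def[symmetric] g0_def[symmetric] K_def[symmetric]
      J_MSE_w_ZF_polar[OF nh0 nh1 corr tau c1(2) sig(3), folded K_def]
    using closed_form degenerate sign
      reciprocal_square_profile.monotonicity_and_minimum[OF profile]
    by simp
qed

end
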